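(* ${\rm Eigen}(\sigma_{\varphi,\mathfrak{w}},V^\Gamma)=\bigcup\{{\rm Eigen}(\sigma_{\varphi\restriction_{\frac\alpha\sim},\mathfrak{w}^{\frac\alpha\sim}},V^{\frac\alpha\sim}):\alpha\in\Gamma\}$.
   Context: $V$ is a vector space over a field $F$, $\Gamma$ a nonempty set, $\varphi:\Gamma\to\Gamma$ a self-map, and $\mathfrak{w}=(\mathfrak{w}_\alpha)_{\alpha\in\Gamma}\in F^\Gamma$. The weighted generalized shift is $\sigma_{\varphi,\mathfrak{w}}:V^\Gamma\to V^\Gamma$, $(x_\alpha)_{\alpha\in\Gamma}\mapsto(\mathfrak{w}_\alpha x_{\varphi(\alpha)})_{\alpha\in\Gamma}$. For nonempty $D\subseteq\Gamma$, $\mathfrak{w}^D:=(\mathfrak{w}_\alpha)_{\alpha\in D}$. The relation $\sim$ on $\Gamma$ is defined by $\alpha\sim\beta$ iff there exist $n,m\geq1$ with $\varphi^n(\alpha)=\varphi^m(\beta)$; it is an equivalence relation and $\frac{\alpha}{\sim}$ denotes the equivalence class of $\alpha$ (which is mapped into itself by $\varphi$). For a linear map $T:W\to W$, ${\rm Eigen}(T,W)$ is the set of all $r\in F$ such that $T(x)=rx$ for some nonzero $x\in W$. *)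

theory Defs
  imports Main "HOL.Vector_Spaces"
begin

text \<open>V^D for D a subset of the index set: functions 'a => 'v vanishing outside D.\<close>
definition funspace :: "'a set \<Rightarrow> ('a \<Rightarrow> 'v::zero) set" where
  "funspace D = {x. \<forall>\<alpha>. \<alpha> \<notin> D \<longrightarrow> x \<alpha> = 0}"

definition wshift :: "('f \<Rightarrow> 'v \<Rightarrow> 'v) \<Rightarrow> 'a set \<Rightarrow> ('a \<Rightarrow> 'a) \<Rightarrow> ('a \<Rightarrow> 'f)
    \<Rightarrow> ('a \<Rightarrow> 'v::zero) \<Rightarrow> ('a \<Rightarrow> 'v)" where
  "wshift s D \<phi> w x = (\<lambda>\<alpha>. if \<alpha> \<in> D then s (w \<alpha>) (x (\<phi> \<alpha>)) else 0)"

definition eigen :: "('f \<Rightarrow> 'v \<Rightarrow> 'v) \<Rightarrow> (('a \<Rightarrow> 'v) \<Rightarrow> ('a \<Rightarrow> 'v)) \<Rightarrow> ('a \<Rightarrow> 'v::zero) set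
    \<Rightarrow> 'f set" where
  "eigen s T W = {r. \<exists>x\<in>W. x \<noteq> (\<lambda>_. 0) \<and> T x = (\<lambda>\<alpha>. s r (x \<alpha>))}"

definition shift_rel :: "('a \<Rightarrow> 'a) \<Rightarrow> 'a \<Rightarrow> 'a \<Rightarrow> bool" where
  "shift_rel \<phi> \<alpha> \<beta> = (\<exists>n m. n \<ge> 1 \<and> m \<ge> 1 \<and> (\<phi> ^^ n) \<alpha> = (\<phi> ^^ m) \<beta>)"

definition shift_class :: "'a set \<Rightarrow> ('a \<Rightarrow> 'a) \<Rightarrow> 'a \<Rightarrow> 'a set" where
  "shift_class \<Gamma> \<phi> \<alpha> = {\<beta> \<in> \<Gamma>. shift_rel \<phi> \<alpha> \<beta>}"

end

theory Submission
  imports Defs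
begin

text \<open>The relation \<open>\<sim>\<close> is unchanged when \<open>\<phi>\<close> is applied to its second argument, so on \<open>\<Gamma>\<close>
  every class \<open>C\<close> satisfies \<open>\<beta> \<in> C \<longleftrightarrow> \<phi> \<beta> \<in> C\<close>. Since \<open>\<phi>(C) \<subseteq> C\<close>, restricting an eigenvector
  of the shift on \<open>V\<^sup>\<Gamma>\<close> to the class of a point where it does not vanish gives an eigenvector
  of the shift on \<open>V\<^sup>C\<close>. Since \<open>\<phi>\<^sup>-\<^sup>1(C) \<inter> \<Gamma> \<subseteq> C\<close>, the two shifts agree on vectors supported in
  \<open>C\<close>, so every eigenvalue on a class is an eigenvalue on \<open>\<Gamma>\<close>.\<close>

lemma shift_rel_refl: "shift_rel \<phi> \<alpha> \<alpha>"
  unfolding shift_rel_def by blast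

lemma shift_rel_apply_right_iff: "shift_rel \<phi> \<alpha> (\<phi> \<beta>) \<longleftrightarrow> shift_rel \<phi> \<alpha> \<beta>"
proof
  assume "shift_rel \<phi> \<alpha> (\<phi> \<beta>)"
  then obtain n m where "n \<ge> 1" "m \<ge> 1" "(\<phi> ^^ n) \<alpha> = (\<phi> ^^ m) (\<phi> \<beta>)"
    unfolding shift_rel_def by blast
  moreover have "(\<phi> ^^ m) (\<phi> \<beta>) = (\<phi> ^^ Suc m) \<beta>"
    by (simp add: funpow_swap1)
  ultimately show "shift_rel \<phi> \<alpha> \<beta>"
    unfolding shift_rel_def by (intro exI[of _ n] exI[of _ "Suc m"]) simp
next
  assume "shift_rel \<phi> \<alpha> \<beta>"
  then obtain n m where "n \<ge> 1" "m \<ge> 1" "(\<phi> ^^ n) \<alpha> = (\<phi> ^^ m) \<beta>"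
    unfolding shift_rel_def by blast
  moreover have "(\<phi> ^^ m) (\<phi> \<beta>) = \<phi> ((\<phi> ^^ m) \<beta>)"
    by (simp add: funpow_swap1)
  ultimately show "shift_rel \<phi> \<alpha> (\<phi> \<beta>)"
    unfolding shift_rel_def by (intro exI[of _ "Suc n"] exI[of _ m]) simp
qed

lemma self_in_shift_class: "\<alpha> \<in> \<Gamma> \<Longrightarrow> \<alpha> \<in> shift_class \<Gamma> \<phi> \<alpha>"
  unfolding shift_class_def by (simp add: shift_rel_refl)

lemma shift_class_subset: "shift_class \<Gamma> \<phi> \<alpha> \<subseteq> \<Gamma>"
  unfolding shift_class_def by blast

lemma apply_in_shift_class:
  "\<forall>\<gamma>\<in>\<Gamma>. \<phi> \<gamma> \<in> \<Gamma> \<Longrightarrow> \<beta> \<in> shift_class \<Gamma> \<phi> \<alpha> \<Longrightarrow> \<phi> \<beta> \<in> shift_class \<Gamma> \<phi> \<alpha>"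
  unfolding shift_class_def by (simp add: shift_rel_apply_right_iff)

lemma in_shift_class_if_apply_in:
  "\<beta> \<in> \<Gamma> \<Longrightarrow> \<phi> \<beta> \<in> shift_class \<Gamma> \<phi> \<alpha> \<Longrightarrow> \<beta> \<in> shift_class \<Gamma> \<phi> \<alpha>"
  unfolding shift_class_def by (simp add: shift_rel_apply_right_iff)

lemma funspace_mono: "D \<subseteq> D' \<Longrightarrow> funspace D \<subseteq> funspace D'"
  unfolding funspace_def by blast

lemma eigen_mono_extension:
  assumes "W \<subseteq> W'" and "\<And>x. x \<in> W \<Longrightarrow> T' x = T x"
  shows "eigen s T W \<subseteq> eigen s T' W'"
proof
  fix r assume "r \<in> eigen s T W"
  then obtain x where "x \<in> W" "x \<noteq> (\<lambda>_. 0)" "T x = (\<lambda>\<beta>. s r (x \<beta>))"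
    unfolding eigen_def by blast
  with assms show "r \<in> eigen s T' W'"
    unfolding eigen_def by (intro CollectI bexI[of _ x]) auto
qed

lemma wshift_eq_on_funspace_subset:
  assumes "D \<subseteq> \<Gamma>" and "\<And>\<beta>. \<beta> \<in> \<Gamma> \<Longrightarrow> \<phi> \<beta> \<in> D \<Longrightarrow> \<beta> \<in> D"
    and "\<And>a. s a 0 = 0" and "x \<in> funspace D"
  shows "wshift s \<Gamma> \<phi> w x = wshift s D \<phi> w x"
proof
  fix \<beta>
  have "x (\<phi> \<beta>) = 0" if "\<beta> \<in> \<Gamma>" "\<beta> \<notin> D"
    using that assms(2,4) unfolding funspace_def by blast
  with assms(1,3) show "wshift s \<Gamma> \<phi> w x \<beta> = wshift s D \<phi> w x \<beta>"
    unfolding wshift_def by auto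
qed

lemma eigen_wshift_mono:
  assumes "D \<subseteq> \<Gamma>" and "\<And>\<beta>. \<beta> \<in> \<Gamma> \<Longrightarrow> \<phi> \<beta> \<in> D \<Longrightarrow> \<beta> \<in> D" and "\<And>a. s a 0 = 0"
  shows "eigen s (wshift s D \<phi> w) (funspace D) \<subseteq> eigen s (wshift s \<Gamma> \<phi> w) (funspace \<Gamma>)"
  using assms by (intro eigen_mono_extension funspace_mono wshift_eq_on_funspace_subset)

lemma eigen_wshift_restrict:
  assumes "D \<subseteq> \<Gamma>" and "\<And>\<beta>. \<beta> \<in> D \<Longrightarrow> \<phi> \<beta> \<in> D" and "\<And>a. s a 0 = 0"
    and eigenvector: "wshift s \<Gamma> \<phi> w x = (\<lambda>\<beta>. s r (x \<beta>))"
    and "\<alpha> \<in> D" and "x \<alpha> \<noteq> 0"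
  shows "r \<in> eigen s (wshift s D \<phi> w) (funspace D)"
proof -
  define y where "y = (\<lambda>\<beta>. if \<beta> \<in> D then x \<beta> else 0)"
  have "wshift s D \<phi> w y = (\<lambda>\<beta>. s r (y \<beta>))"
  proof
    fix \<beta>
    show "wshift s D \<phi> w y \<beta> = s r (y \<beta>)"
    proof (cases "\<beta> \<in> D")
      case True
      with assms(1,2) have "wshift s D \<phi> w y \<beta> = wshift s \<Gamma> \<phi> w x \<beta>"
        unfolding wshift_def y_def by auto
      with True show ?thesis by (simp add: eigenvector y_def)
    qed (simp add: wshift_def y_def assms(3))
  qed
  moreover have "y \<in> funspace D" "y \<alpha> \<noteq> 0"
    using \<open>\<alpha> \<in> D\<close> \<open>x \<alpha> \<noteq> 0\<close> by (auto simp: y_def funspace_def)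
  ultimately show ?thesis unfolding eigen_def by (auto intro!: bexI[of _ y])
qed

theorem lemma2p4:
  fixes scale :: "'f::field \<Rightarrow> 'v::ab_group_add \<Rightarrow> 'v"
    and \<Gamma> :: "'a set" and \<phi> :: "'a \<Rightarrow> 'a" and w :: "'a \<Rightarrow> 'f"
  assumes "vector_space scale"
    and "\<Gamma> \<noteq> {}"
    and "\<forall>\<alpha>\<in>\<Gamma>. \<phi> \<alpha> \<in> \<Gamma>"
  shows "eigen scale (wshift scale \<Gamma> \<phi> w) (funspace \<Gamma>)
       = (\<Union>\<alpha>\<in>\<Gamma>. eigen scale (wshift scale (shift_class \<Gamma> \<phi> \<alpha>) \<phi> w)
                                 (funspace (shift_class \<Gamma> \<phi> \<alpha>)))"
proof -
  let ?E = "\<lambda>D. eigen scale (wshift scale D \<phi> w) (funspace D)"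
  have scale_zero: "\<And>a. scale a 0 = 0"
    using assms(1) by (simp add: module.scale_zero_right module_iff_vector_space)
  have "?E \<Gamma> \<subseteq> (\<Union>\<alpha>\<in>\<Gamma>. ?E (shift_class \<Gamma> \<phi> \<alpha>))"
  proof
    fix r assume "r \<in> ?E \<Gamma>"
    then obtain x where "x \<in> funspace \<Gamma>" "x \<noteq> (\<lambda>_. 0)"
      and eigenvector: "wshift scale \<Gamma> \<phi> w x = (\<lambda>\<beta>. scale r (x \<beta>))"
      unfolding eigen_def by blast
    then obtain \<alpha> where "x \<alpha> \<noteq> 0" by auto
    with \<open>x \<in> funspace \<Gamma>\<close> have "\<alpha> \<in> \<Gamma>" unfolding funspace_def by blast
    have "r \<in> ?E (shift_class \<Gamma> \<phi> \<alpha>)"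
      using shift_class_subset apply_in_shift_class[OF assms(3)] scale_zero eigenvector
        self_in_shift_class[OF \<open>\<alpha> \<in> \<Gamma>\<close>] \<open>x \<alpha> \<noteq> 0\<close> by (rule eigen_wshift_restrict)
    with \<open>\<alpha> \<in> \<Gamma>\<close> show "r \<in> (\<Union>\<alpha>\<in>\<Gamma>. ?E (shift_class \<Gamma> \<phi> \<alpha>))" by (rule UN_I)
  qed
  moreover have "(\<Union>\<alpha>\<in>\<Gamma>. ?E (shift_class \<Gamma> \<phi> \<alpha>)) \<subseteq> ?E \<Gamma>"
    using shift_class_subset in_shift_class_if_apply_in scale_zero
    by (intro UN_least eigen_wshift_mono)
  ultimately show ?thesis by (rule equalityI)
qed

end
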